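(* Let $k$ be a positive integer and $i$ an integer with $1\le i<\left\lfloor\frac{k+1}2\right\rfloor$. Then $\beta=\frac1{i^2}$ is a zero of the polynomial $P_k(1,\beta,0)$ of multiplicity at least $\left\lfloor\frac{k+1}2\right\rfloor-i$.
   Context: Define $\widetilde c_n\in\mathbb Q[\beta]$ by $\widetilde c_0=2$, $\widetilde c_1=1$, $(n+1)\widetilde c_{n+1}=\widetilde c_n+\frac\beta4(n-1)\widetilde c_{n-1}$ for $n\ge1$, and $\widetilde c_n=0$ for $n<0$. $P_k(1,\beta,0)$ is the $k\times k$ determinant with $(j,l)$ entry $\widetilde c_{k-2(j-1)+(l-1)}$, $1\le j,l\le k$. *)

theory Defs
  imports "HOL-Computational_Algebra.Polynomial" "Jordan_Normal_Form.Determinant"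
begin

fun ctilde_nat :: "nat \<Rightarrow> rat poly" where
  "ctilde_nat 0 = [:2:]"
| "ctilde_nat (Suc 0) = [:1:]"
| "ctilde_nat (Suc (Suc n)) =
     smult (1 / (of_nat n + 2)) (ctilde_nat (Suc n) + [:0, of_nat n / 4:] * ctilde_nat n)"

definition ctilde :: "int \<Rightarrow> rat poly" where
  "ctilde n = (if n < 0 then 0 else ctilde_nat (nat n))"

text \<open>P_k(1,beta,0): k x k determinant with (j,l) entry c~_(k-2(j-1)+(l-1)), 1-based;
  here with 0-based indices j,l < k the entry is c~_(k-2j+l).\<close>
definition Pk :: "nat \<Rightarrow> rat poly" where
  "Pk k = det (mat k k (\<lambda>(j, l). ctilde (int k - 2 * int j + int l)))"

end

theory Submission
  imports Defs "HOL-Computational_Algebra.Formal_Power_Series"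
begin

text \<open>
  Put b = 1/i^2 and a = 1/(2i), so that b/4 = a^2. The recurrence says that
  D = (SUM n. c_n(b) X^n) - 1 solves (1 - a^2 X^2) D' = D with D(0) = 1, and since 2ia = 1 so does
  ((1 + aX)/(1 - aX))^i. Hence (1 - aX)^i (SUM n. c_n(b) X^n) = (1 + aX)^i + (1 - aX)^i is even,
  i.e. SUM t. (i choose t) (-a)^t c_(n-t)(b) = 0 for odd n.
  Column l of the matrix holds c_(k-2j+l), so for every column l >= i with k + l odd the
  unimodular column operation col_l := SUM t. (i choose t) (-a)^t col_(l-t) yields a column
  vanishing at beta = b. There are (k + 1 - i) div 2 such columns, which is at least the
  claimed multiplicity.
\<close>

lemma fps_nth_binomial_power:
  fixes c :: "'a::comm_ring_1"
  shows "fps_nth ((1 + fps_const c * fps_X) ^ n) k = of_nat (n choose k) * c ^ k"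
proof (induction n arbitrary: k)
  case (Suc n)
  have "(1 + fps_const c * fps_X) ^ Suc n
      = (1 + fps_const c * fps_X) ^ n + fps_const c * (fps_X * (1 + fps_const c * fps_X) ^ n)"
    by (simp add: algebra_simps)
  then show ?case
    using Suc by (cases k) (simp_all add: algebra_simps)
qed (auto simp: gr0_conv_Suc)

lemma fps_deriv_binomial_power:
  fixes a :: "'a::comm_ring_1"
  shows "(1 + fps_const a * fps_X) * fps_deriv ((1 + fps_const a * fps_X) ^ i)
       = fps_const (of_nat i * a) * (1 + fps_const a * fps_X) ^ i"
proof (cases i)
  case (Suc j)
  define L where "L = 1 + fps_const a * fps_X"
  have "fps_deriv (L ^ i) = fps_const (of_nat i * a) * L ^ j"
    unfolding fps_deriv_power by (simp add: Suc L_def fps_const_mult)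
  then have "L * fps_deriv (L ^ i) = fps_const (of_nat i * a) * L ^ Suc j"
    by (simp add: algebra_simps)
  then show ?thesis
    by (simp add: Suc L_def)
qed simp

lemma fps_linear_ode_unique:
  fixes F :: "'a::field_char_0 fps"
  assumes ode: "(1 + fps_const a * fps_X) * fps_deriv F = fps_const c * F" and "fps_nth F 0 = 0"
  shows "F = 0"
proof -
  have rec: "of_nat (Suc n) * fps_nth F (Suc n) + a * of_nat n * fps_nth F n = c * fps_nth F n" for n
    using arg_cong[OF ode, of "\<lambda>G. fps_nth G n"] by (cases n) (simp_all add: algebra_simps)
  have "fps_nth F n = 0" for n
  proof (induction n)
    case (Suc n)
    then show ?case
      using rec[of n] by (simp del: of_nat_Suc)
  qed (fact \<open>fps_nth F 0 = 0\<close>)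
  then show ?thesis
    by (intro fps_ext) simp
qed

lemma fps_eq_binomial_power_ratio:
  fixes D :: "'a::field_char_0 fps" and a :: 'a
  assumes ia: "of_nat i * a = 1 / 2"
    and D0: "fps_nth D 0 = 1" and D1: "fps_nth D 1 = 1"
    and rec: "\<And>n. of_nat (n + 2) * fps_nth D (n + 2) = fps_nth D (n + 1) + a^2 * of_nat n * fps_nth D n"
  shows "(1 + fps_const (- a) * fps_X) ^ i * D = (1 + fps_const a * fps_X) ^ i"
proof -
  define L where "L = 1 + fps_const a * fps_X"
  define R where "R = 1 + fps_const (- a) * fps_X"
  have LR: "L * R = 1 - fps_const (a^2) * fps_X^2"
    by (simp add: L_def R_def algebra_simps power2_eq_square fps_const_mult flip: fps_const_neg)
  have "fps_nth (L * R * fps_deriv D) n = fps_nth D n" for n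
    using D0 D1 rec[of "n - 1"]
    by (cases n) (simp_all add: LR fps_X_power_mult_nth algebra_simps numeral_2_eq_2)
  then have ode: "L * R * fps_deriv D = D"
    by (intro fps_ext)
  have R_deriv: "R * fps_deriv (R ^ i) = - fps_const (1/2) * R ^ i"
    using fps_deriv_binomial_power[of "- a" i] ia by (simp add: R_def)
  have L_deriv: "L * fps_deriv (L ^ i) = fps_const (1/2) * L ^ i"
    using fps_deriv_binomial_power[of a i] ia by (simp add: L_def)
  define H where "H = R ^ i * D"
  have "R * (L * fps_deriv H - fps_const (1/2) * H)
      = R ^ i * (L * R * fps_deriv D) + L * (R * fps_deriv (R ^ i)) * D - fps_const (1/2) * R * H"
    by (simp add: H_def algebra_simps)
  also have "\<dots> = H - fps_const (1/2) * (L + R) * H"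
    unfolding ode R_deriv H_def by (simp add: algebra_simps flip: fps_const_neg)
  also have "L + R = fps_const 2"
    by (simp add: L_def R_def numeral_fps_const flip: fps_const_neg)
  finally have "R * (L * fps_deriv H - fps_const (1/2) * H) = 0"
    by simp
  moreover have "R \<noteq> 0"
  proof
    assume "R = 0"
    then have "fps_nth R 0 = 0"
      by simp
    then show False
      by (simp add: R_def)
  qed
  ultimately have H_ode: "L * fps_deriv H = fps_const (1/2) * H"
    by simp
  have "L * fps_deriv (H - L ^ i) = fps_const (1/2) * (H - L ^ i)"
    by (simp add: H_ode L_deriv right_diff_distrib)
  moreover have "fps_nth (H - L ^ i) 0 = 0"
    by (simp add: H_def L_def R_def D0 fps_nth_power_0)
  ultimately have "H - L ^ i = 0"
    unfolding L_def by (rule fps_linear_ode_unique)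
  then show ?thesis
    by (simp add: H_def L_def R_def)
qed

lemma poly_ctilde_nat_Suc_Suc:
  "of_nat (n + 2) * poly (ctilde_nat (n + 2)) b
     = poly (ctilde_nat (n + 1)) b + b / 4 * of_nat n * poly (ctilde_nat n) b"
proof -
  have "(of_nat n + 2 :: rat) \<noteq> 0"
    by (simp add: add_nonneg_pos)
  then show ?thesis
    by (simp add: numeral_2_eq_2 field_simps)
qed

lemma binomial_power_mult_ctilde_nat_fps:
  fixes i :: nat
  assumes "i \<ge> 1"
  defines "a \<equiv> 1 / (2 * of_nat i :: rat)"
  shows "(1 + fps_const (- a) * fps_X) ^ i * Abs_fps (\<lambda>n. poly (ctilde_nat n) (1 / of_nat i ^ 2))
       = (1 + fps_const a * fps_X) ^ i + (1 + fps_const (- a) * fps_X) ^ i"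
proof -
  define E where "E = Abs_fps (\<lambda>n. poly (ctilde_nat n) (1 / of_nat i ^ 2))"
  have "(1 + fps_const (- a) * fps_X) ^ i * (E - 1) = (1 + fps_const a * fps_X) ^ i"
  proof (rule fps_eq_binomial_power_ratio)
    show "of_nat i * a = 1 / 2"
      using assms by (simp add: a_def)
    show "fps_nth (E - 1) 0 = 1" "fps_nth (E - 1) 1 = 1"
      by (simp_all add: E_def)
    show "of_nat (n + 2) * fps_nth (E - 1) (n + 2)
        = fps_nth (E - 1) (n + 1) + a^2 * of_nat n * fps_nth (E - 1) n" for n
      using poly_ctilde_nat_Suc_Suc[of n "1 / of_nat i ^ 2"]
      by (simp add: E_def a_def power2_eq_square)
  qed
  then show ?thesis
    by (simp add: E_def algebra_simps)
qed

lemma ctilde_nat_binomial_convolution_odd: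
  fixes i n :: nat
  assumes "i \<ge> 1" and "odd n"
  shows "(\<Sum>t = 0..n. of_nat (i choose t) * (- (1 / (2 * of_nat i))) ^ t
                      * poly (ctilde_nat (n - t)) (1 / of_nat i ^ 2)) = 0"
proof -
  define a where "a = 1 / (2 * of_nat i :: rat)"
  define E where "E = Abs_fps (\<lambda>n. poly (ctilde_nat n) (1 / of_nat i ^ 2))"
  have "fps_nth ((1 + fps_const (- a) * fps_X) ^ i * E) n
      = of_nat (i choose n) * a ^ n + of_nat (i choose n) * (- a) ^ n"
    using binomial_power_mult_ctilde_nat_fps[OF \<open>i \<ge> 1\<close>]
    by (simp add: a_def E_def fps_nth_binomial_power)
  also have "\<dots> = 0"
    using \<open>odd n\<close> by (simp add: power_minus_odd)
  finally show ?thesis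
    by (simp add: fps_mult_nth fps_nth_binomial_power a_def E_def)
qed

lemma ctilde_binomial_convolution_odd:
  fixes i c :: nat and s :: int
  assumes "i \<ge> 1" and "i \<le> c" and "odd s"
  shows "(\<Sum>t = 0..c. of_nat (i choose t) * (- (1 / (2 * of_nat i))) ^ t
                      * poly (ctilde (s - int t)) (1 / of_nat i ^ 2)) = 0"
    (is "sum ?f {0..c} = 0")
proof (cases "s < 0")
  case True
  then show ?thesis
    by (simp add: ctilde_def)
next
  case False
  define n where "n = nat s"
  have s: "s = int n" and "odd n"
    using False \<open>odd s\<close> by (simp_all add: n_def even_nat_iff)
  have vanish: "?f t = 0" if "min c n < t" for t
    using that \<open>i \<le> c\<close> by (auto simp: ctilde_def s)
  have "sum ?f {0..c} = sum ?f {0..min c n}"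
    by (intro sum.mono_neutral_right ballI vanish) auto
  also have "\<dots> = sum ?f {0..n}"
    by (intro sum.mono_neutral_left ballI vanish) auto
  also have "\<dots> = (\<Sum>t = 0..n. of_nat (i choose t) * (- (1 / (2 * of_nat i))) ^ t
                              * poly (ctilde_nat (n - t)) (1 / of_nat i ^ 2))"
    by (rule sum.cong) (auto simp: ctilde_def s nat_diff_distrib)
  also have "\<dots> = 0"
    using assms(1) \<open>odd n\<close> by (rule ctilde_nat_binomial_convolution_odd)
  finally show ?thesis .
qed

lemma power_card_dvd_det_if_columns_dvd:
  fixes A :: "'a::idom_modulo mat" and p :: 'a
  assumes A: "A \<in> carrier_mat n n" and S: "S \<subseteq> {0..<n}"
    and dvd: "\<And>j c. j < n \<Longrightarrow> c \<in> S \<Longrightarrow> p dvd A $$ (j, c)"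
  shows "p ^ card S dvd det A"
proof -
  define B where "B = mat n n (\<lambda>(j, c). if c \<in> S then A $$ (j, c) div p else A $$ (j, c))"
  define P where "P = mat n n (\<lambda>(l, c). if l = c then (if c \<in> S then p else 1) else 0)"
  have B: "B \<in> carrier_mat n n" and P: "P \<in> carrier_mat n n"
    by (auto simp: B_def P_def)
  have "B * P = A"
  proof (rule eq_matI)
    fix j c
    assume "j < dim_row A" and "c < dim_col A"
    then have j: "j < n" and c: "c < n"
      using A by auto
    have "(B * P) $$ (j, c) = (\<Sum>l = 0..<n. B $$ (j, l) * P $$ (l, c))"
      using j c B P by (simp add: scalar_prod_def)
    also have "\<dots> = B $$ (j, c) * P $$ (c, c)"
      using c by (simp add: P_def if_distrib cong: if_cong)
    also have "\<dots> = A $$ (j, c)"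
      using j c dvd[OF j] by (auto simp: B_def P_def)
    finally show "(B * P) $$ (j, c) = A $$ (j, c)" .
  qed (use A B P in auto)
  moreover have "det P = p ^ card S"
  proof -
    have "det P = prod_list (diag_mat P)"
      by (rule det_upper_triangular[OF _ P]) (auto simp: P_def)
    also have "\<dots> = (\<Prod>c = 0..<n. if c \<in> S then p else 1)"
      by (simp add: diag_mat_def P_def prod.distinct_set_conv_list[symmetric])
    also have "\<dots> = p ^ card S"
      using S by (simp add: prod.If_cases Int_absorb1)
    finally show ?thesis .
  qed
  ultimately show ?thesis
    using det_mult[OF B P] by simp
qed

definition column_combination_mat :: "nat \<Rightarrow> nat set \<Rightarrow> (nat \<Rightarrow> 'a) \<Rightarrow> 'a::zero_neq_one mat" where
  "column_combination_mat n S q =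
     mat n n (\<lambda>(l, c). if c \<in> S then (if l \<le> c then q (c - l) else 0) else of_bool (l = c))"

lemma column_combination_mat_carrier [simp]: "column_combination_mat n S q \<in> carrier_mat n n"
  by (simp add: column_combination_mat_def)

lemma det_column_combination_mat:
  fixes q :: "nat \<Rightarrow> 'a::comm_ring_1"
  assumes "q 0 = 1"
  shows "det (column_combination_mat n S q) = 1"
proof -
  have "det (column_combination_mat n S q) = prod_list (diag_mat (column_combination_mat n S q))"
    by (rule det_upper_triangular) (auto simp: column_combination_mat_def)
  also have "diag_mat (column_combination_mat n S q) = map (\<lambda>_. 1) [0..<n]"
    unfolding diag_mat_def using assms by (intro map_cong) (auto simp: column_combination_mat_def)
  finally show ?thesis
    by (simp add: map_replicate_const)
qed

lemma index_mult_column_combination_mat: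
  assumes "A \<in> carrier_mat n n" and "j < n" and "c < n" and "c \<in> S"
  shows "(A * column_combination_mat n S q) $$ (j, c) = (\<Sum>t = 0..c. A $$ (j, c - t) * q t)"
proof -
  have "(A * column_combination_mat n S q) $$ (j, c)
      = (\<Sum>l = 0..<n. A $$ (j, l) * (if l \<le> c then q (c - l) else 0))"
    using assms by (simp add: scalar_prod_def column_combination_mat_def)
  also have "\<dots> = (\<Sum>l \<in> {l \<in> {0..<n}. l \<le> c}. A $$ (j, l) * q (c - l))"
    unfolding sum.inter_filter[OF finite_atLeastLessThan] by (intro sum.cong) auto
  also have "{l \<in> {0..<n}. l \<le> c} = {0..c}"
    using \<open>c < n\<close> by auto
  also have "(\<Sum>l = 0..c. A $$ (j, l) * q (c - l)) = (\<Sum>t = 0..c. A $$ (j, c - t) * q t)"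
    by (subst sum.atLeastAtMost_rev) (auto intro: sum.cong)
  finally show ?thesis .
qed

lemma root_power_dvd_Pk:
  fixes k i :: nat
  assumes "i \<ge> 1"
  shows "[:- (1 / of_nat i ^ 2), 1:] ^ ((k + 1 - i) div 2) dvd Pk k"
proof -
  define b :: rat where "b = 1 / of_nat i ^ 2"
  define m where "m = (k + 1 - i) div 2"
  define S where "S = (\<lambda>r. k - 1 - 2 * r) ` {..<m}"
  define q :: "nat \<Rightarrow> rat poly" where "q t = [:of_nat (i choose t) * (- (1 / (2 * of_nat i))) ^ t:]" for t
  define M where "M = mat k k (\<lambda>(j, l). ctilde (int k - 2 * int j + int l))"
  define C where "C = column_combination_mat k S q"
  have M: "M \<in> carrier_mat k k" and C: "C \<in> carrier_mat k k"
    by (simp_all add: M_def C_def)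
  have column_bound: "2 * r + i + 1 \<le> k" if "r \<in> {..<m}" for r
    using that by (simp add: m_def)
  have "inj_on (\<lambda>r. k - 1 - 2 * r) {..<m}"
  proof (rule inj_onI)
    fix x y
    assume "x \<in> {..<m}" "y \<in> {..<m}" "k - 1 - 2 * x = k - 1 - 2 * y"
    then show "x = y"
      using column_bound[of x] column_bound[of y] by linarith
  qed
  then have "card S = m"
    by (simp add: S_def card_image)
  have S_columns: "i \<le> c" "c < k" "odd (int k + int c)" if "c \<in> S" for c
  proof -
    obtain r where "r \<in> {..<m}" and c: "c = k - 1 - 2 * r"
      using \<open>c \<in> S\<close> by (auto simp: S_def)
    have r: "2 * r + i + 1 \<le> k"
      using \<open>r \<in> {..<m}\<close> by (rule column_bound)
    then show "i \<le> c" and "c < k"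
      using c by linarith+
    have "int k + int c = 2 * (int k - int r - 1) + 1"
      using c r by (simp add: of_nat_diff)
    then show "odd (int k + int c)"
      by simp
  qed
  have "[:- b, 1:] dvd (M * C) $$ (j, c)" if "j < k" and "c \<in> S" for j c
  proof -
    have "i \<le> c" and "c < k" and "odd (int k - 2 * int j + int c)"
      using S_columns[OF \<open>c \<in> S\<close>] by simp_all
    have "(M * C) $$ (j, c) = (\<Sum>t = 0..c. M $$ (j, c - t) * q t)"
      unfolding C_def using M \<open>j < k\<close> \<open>c < k\<close> \<open>c \<in> S\<close>
      by (rule index_mult_column_combination_mat)
    then have "poly ((M * C) $$ (j, c)) b
        = (\<Sum>t = 0..c. of_nat (i choose t) * (- (1 / (2 * of_nat i))) ^ t
                        * poly (ctilde (int k - 2 * int j + int c - int t)) b)"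
      using \<open>j < k\<close> \<open>c < k\<close>
      by (auto simp: M_def q_def poly_sum of_nat_diff algebra_simps intro!: sum.cong)
    also have "\<dots> = 0"
      unfolding b_def using \<open>i \<ge> 1\<close> \<open>i \<le> c\<close> \<open>odd (int k - 2 * int j + int c)\<close>
      by (rule ctilde_binomial_convolution_odd)
    finally show ?thesis
      by (simp add: poly_eq_0_iff_dvd)
  qed
  then have "[:- b, 1:] ^ card S dvd det (M * C)"
    by (intro power_card_dvd_det_if_columns_dvd[OF mult_carrier_mat[OF M C]]) (auto dest: S_columns)
  moreover have "det (M * C) = Pk k"
    using det_mult[OF M C] by (simp add: C_def det_column_combination_mat q_def Pk_def M_def)
  ultimately show ?thesis
    by (simp add: \<open>card S = m\<close> m_def b_def)
qed

theorem lemma4p8: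
  fixes k i :: nat
  assumes "k \<ge> 1" and "1 \<le> i" and "i < (k + 1) div 2"
  shows "[:- (1 / (of_nat i)^2), 1:] ^ ((k + 1) div 2 - i) dvd Pk k"
proof -
  have "(k + 1) div 2 - i \<le> (k + 1 - i) div 2"
    by linarith
  then have "[:- (1 / (of_nat i)^2), 1:] ^ ((k + 1) div 2 - i)
           dvd [:- (1 / (of_nat i)^2), 1:] ^ ((k + 1 - i) div 2)"
    by (rule le_imp_power_dvd)
  also have "\<dots> dvd Pk k"
    using \<open>1 \<le> i\<close> by (rule root_power_dvd_Pk)
  finally show ?thesis .
qed

end
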